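(* For every $n\ge 2$, letting $P_n$ denote the path on $n$ vertices: (i) ${\rm I}_e(P_n)=\frac{n-1}{3}$ if $n\equiv 1 \pmod 3$; (ii) ${\rm I}_e(P_n)=\left\lceil\frac{n-1}{3}\right\rceil$ if $n\equiv 2 \pmod 3$; (iii) ${\rm I}_e(P_n)=\left\lfloor\frac{n-1}{3}\right\rfloor$ if $n\equiv 0\pmod 3$. Moreover, for every $n\ge 3$, letting $C_n$ denote the cycle on $n$ vertices, ${\rm I}_e(C_n)={\rm I}_e(P_n)+1$.
   Context: All graphs are finite and simple. A graph is locally irregular if no two adjacent vertices have the same degree. An edge-irregulator of a graph $G$ is a set $S\subseteq E(G)$ such that $G-S$ is locally irregular; ${\rm I}_e(G)$ is the minimum cardinality of an edge-irregulator of $G$. *)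

theory Defs
  imports Complex_Main
begin

text \<open>A finite simple graph (without isolated-vertex information, irrelevant here) is given by its edge set E, each edge a 2-element set.\<close>

definition degree :: "'a set set \<Rightarrow> 'a \<Rightarrow> nat" where
  "degree E v = card {e \<in> E. v \<in> e}"

definition locally_irregular :: "'a set set \<Rightarrow> bool" where
  "locally_irregular E \<longleftrightarrow> (\<forall>u v. {u, v} \<in> E \<and> u \<noteq> v \<longrightarrow> degree E u \<noteq> degree E v)"

definition edge_irregulator :: "'a set set \<Rightarrow> 'a set set \<Rightarrow> bool" where
  "edge_irregulator E S \<longleftrightarrow> S \<subseteq> E \<and> locally_irregular (E - S)"

definition irr_e :: "'a set set \<Rightarrow> nat" where
  "irr_e E = (LEAST k. \<exists>S. edge_irregulator E S \<and> card S = k)"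

definition path_edges :: "nat \<Rightarrow> nat set set" where
  "path_edges n = {{i, Suc i} | i. Suc i < n}"

definition cycle_edges :: "nat \<Rightarrow> nat set set" where
  "cycle_edges n = path_edges n \<union> {{n - 1, 0}}"

end

theory Submission
  imports Defs
begin

(* The edges kept by an edge-irregulator form a locally irregular subgraph; inside P_n or C_n it
   has maximum degree 2, so each of its edges joins a vertex of degree 1 to a vertex of degree 2.
   Counting incidences, if c vertices have degree 2 then there are 2c edges and 2c vertices of
   degree 1, so 3c <= n and at most 2 * floor(n/3) edges are kept; floor(n/3) vertex-disjoint
   copies of P_3 attain this. So I_e(P_n) = (n - 1) - 2 * floor(n/3) and
   I_e(C_n) = n - 2 * floor(n/3). *)

lemma degree_mono: "finite E \<Longrightarrow> F \<subseteq> E \<Longrightarrow> degree F v \<le> degree E v"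
  unfolding degree_def by (rule card_mono) auto

lemma degree_insert_le: "finite E \<Longrightarrow> degree (insert e E) v \<le> degree E v + 1"
proof -
  assume "finite E"
  have "{x \<in> insert e E. v \<in> x} \<subseteq> insert e {x \<in> E. v \<in> x}" by auto
  then have "degree (insert e E) v \<le> card (insert e {x \<in> E. v \<in> x})"
    unfolding degree_def using \<open>finite E\<close> by (intro card_mono) auto
  also have "\<dots> \<le> degree E v + 1"
    unfolding degree_def using \<open>finite E\<close> by (simp add: card_insert_le_m1 card_insert_if)
  finally show ?thesis .
qed

lemma degree_Un_eq_left: "v \<notin> \<Union>F \<Longrightarrow> degree (E \<union> F) v = degree E v"
  unfolding degree_def by (rule arg_cong[where f = card]) auto

lemma sum_degree_eq_sum_card_Int:
  assumes "finite A" "finite E"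
  shows "(\<Sum>v\<in>A. degree E v) = (\<Sum>e\<in>E. card (e \<inter> A))"
proof -
  have "(\<Sum>v\<in>A. degree E v) = (\<Sum>v\<in>A. \<Sum>e\<in>E. of_bool (v \<in> e))"
    unfolding degree_def using assms by (simp add: Int_def)
  also have "\<dots> = (\<Sum>e\<in>E. \<Sum>v\<in>A. of_bool (v \<in> e))" by (rule sum.swap)
  also have "\<dots> = (\<Sum>e\<in>E. card (e \<inter> A))"
    using assms by (simp add: Int_def conj_commute)
  finally show ?thesis .
qed

lemma locally_irregular_Un:
  assumes "\<Union>E \<inter> \<Union>F = {}" "locally_irregular E" "locally_irregular F"
  shows "locally_irregular (E \<union> F)"
  unfolding locally_irregular_def
proof (intro allI impI)
  fix u v assume uv: "{u, v} \<in> E \<union> F \<and> u \<noteq> v"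
  show "degree (E \<union> F) u \<noteq> degree (E \<union> F) v"
  proof (cases "{u, v} \<in> E")
    case True
    then have "u \<notin> \<Union>F" "v \<notin> \<Union>F" using assms(1) by blast+
    then show ?thesis using True uv assms(2)
      by (simp add: degree_Un_eq_left locally_irregular_def)
  next
    case False
    then have "{u, v} \<in> F" using uv by blast
    then have "u \<notin> \<Union>E" "v \<notin> \<Union>E" using assms(1) by blast+
    then show ?thesis using \<open>{u, v} \<in> F\<close> uv assms(3) degree_Un_eq_left[of _ E F]
      by (simp add: Un_commute locally_irregular_def)
  qed
qed

lemma locally_irregular_path_3:
  assumes "distinct [a, b, c]"
  shows "locally_irregular {{a, b}, {b, c}}"
proof -
  have "{e \<in> {{a, b}, {b, c}}. b \<in> e} = {{a, b}, {b, c}}"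
    "{e \<in> {{a, b}, {b, c}}. a \<in> e} = {{a, b}}" "{e \<in> {{a, b}, {b, c}}. c \<in> e} = {{b, c}}"
    using assms by auto
  moreover have "{a, b} \<noteq> {b, c}" using assms by (auto simp: doubleton_eq_iff)
  ultimately have "degree {{a, b}, {b, c}} b = 2" "degree {{a, b}, {b, c}} a = 1"
    "degree {{a, b}, {b, c}} c = 1"
    by (simp_all add: degree_def)
  then show ?thesis using assms by (auto simp: locally_irregular_def doubleton_eq_iff)
qed

lemma locally_irregular_edge_degrees:
  assumes "locally_irregular E" "finite E" "\<And>v. degree E v \<le> 2" "e \<in> E" "card e = 2"
  obtains u w where "e = {u, w}" "degree E u = 1" "degree E w = 2"
proof -
  obtain u w where e: "e = {u, w}" "u \<noteq> w" using \<open>card e = 2\<close> by (meson card_2_iff)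
  have "degree E u \<noteq> 0" "degree E w \<noteq> 0"
    unfolding degree_def using assms(2,4) e(1) by auto
  moreover have "degree E u \<noteq> degree E w"
    using assms(1,4) e unfolding locally_irregular_def by blast
  ultimately have "degree E u = 1 \<and> degree E w = 2 \<or> degree E w = 1 \<and> degree E u = 2"
    using assms(3)[of u] assms(3)[of w] by linarith
  then show ?thesis using that e(1) by (metis insert_commute)
qed

lemma locally_irregular_max_degree_2_card_le:
  assumes "locally_irregular E" "finite V" "\<Union>E \<subseteq> V" "\<And>e. e \<in> E \<Longrightarrow> card e = 2"
    "\<And>v. degree E v \<le> 2"
  shows "card E \<le> 2 * (card V div 3)"
proof -
  have "finite E" using assms(2,3) by (simp add: finite_UnionD finite_subset)
  define leaves where "leaves = {v \<in> V. degree E v = 1}"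
  define centres where "centres = {v \<in> V. degree E v = 2}"
  have one_each: "card (e \<inter> leaves) = 1 \<and> card (e \<inter> centres) = 1" if e: "e \<in> E" for e
  proof -
    obtain u w where "e = {u, w}" "degree E u = 1" "degree E w = 2"
      using locally_irregular_edge_degrees[OF assms(1) \<open>finite E\<close> assms(5) e assms(4)[OF e]] .
    moreover have "u \<in> V" "w \<in> V" using assms(3) e \<open>e = {u, w}\<close> by auto
    ultimately have "e \<inter> leaves = {u}" "e \<inter> centres = {w}"
      by (auto simp: leaves_def centres_def)
    then show ?thesis by simp
  qed
  have "card leaves = card E"
    using sum_degree_eq_sum_card_Int[of leaves E] \<open>finite E\<close> assms(2) one_each
    by (simp add: leaves_def)
  moreover have "2 * card centres = card E"
    using sum_degree_eq_sum_card_Int[of centres E] \<open>finite E\<close> assms(2) one_each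
    by (simp add: centres_def)
  moreover have "card leaves + card centres \<le> card V"
    by (subst card_Un_disjoint[symmetric])
      (auto simp: leaves_def centres_def assms(2) intro: card_mono)
  ultimately show ?thesis by presburger
qed

corollary locally_irregular_subgraph_card_le:
  assumes "locally_irregular K" "K \<subseteq> E" "finite V" "\<Union>E \<subseteq> V" "\<And>e. e \<in> E \<Longrightarrow> card e = 2"
    "\<And>v. degree E v \<le> 2"
  shows "card K \<le> 2 * (card V div 3)"
proof (rule locally_irregular_max_degree_2_card_le[OF assms(1,3)])
  have "finite E" using assms(3,4) by (simp add: finite_UnionD finite_subset)
  then show "degree K v \<le> 2" for v
    using degree_mono[OF _ assms(2)] assms(6) le_trans by blast
qed (use assms(2,4,5) in auto)

lemma irr_e_eq_card_diff:
  assumes "finite E" "K \<subseteq> E" "locally_irregular K"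
    "\<And>K'. K' \<subseteq> E \<Longrightarrow> locally_irregular K' \<Longrightarrow> card K' \<le> card K"
  shows "irr_e E = card E - card K"
  unfolding irr_e_def
proof (rule Least_equality)
  have "edge_irregulator E (E - K)"
    using assms(2,3) by (simp add: edge_irregulator_def Diff_Diff_Int Int_absorb1)
  moreover have "card (E - K) = card E - card K"
    using assms(1,2) by (simp add: card_Diff_subset finite_subset)
  ultimately show "\<exists>S. edge_irregulator E S \<and> card S = card E - card K" by blast
next
  fix k assume "\<exists>S. edge_irregulator E S \<and> card S = k"
  then obtain S where "S \<subseteq> E" "locally_irregular (E - S)" "card S = k"
    by (auto simp: edge_irregulator_def)
  moreover have "card (E - S) = card E - card S"
    using \<open>S \<subseteq> E\<close> assms(1) by (simp add: card_Diff_subset finite_subset)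
  ultimately show "card E - card K \<le> k" using assms(4)[of "E - S"] by fastforce
qed

lemma path_edges_eq_image: "path_edges n = (\<lambda>i. {i, Suc i}) ` {..<n - 1}"
  by (auto simp: path_edges_def)

lemma finite_path_edges: "finite (path_edges n)"
  by (simp add: path_edges_eq_image)

lemma card_path_edges: "card (path_edges n) = n - 1"
proof -
  have "inj_on (\<lambda>i. {i, Suc i}) {..<n - 1}"
    by (auto simp: inj_on_def doubleton_eq_iff)
  then show ?thesis by (simp add: path_edges_eq_image card_image)
qed

lemma card_path_edge: "e \<in> path_edges n \<Longrightarrow> card e = 2"
  by (auto simp: path_edges_def)

lemma Union_path_edges_subset: "\<Union>(path_edges n) \<subseteq> {..<n}"
  by (auto simp: path_edges_def)

lemma card_doubleton_le: "card {a, b} \<le> 2"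
  by (cases "a = b") auto

lemma path_edges_incident:
  assumes "e \<in> path_edges n" "v \<in> e"
  shows "e = {v, Suc v} \<and> Suc v < n \<or> e = {v - 1, v} \<and> 0 < v \<and> v < n"
proof -
  obtain i where "e = {i, Suc i}" "Suc i < n" using assms(1) by (auto simp: path_edges_def)
  with assms(2) show ?thesis by auto
qed

lemma degree_path_edges_le: "degree (path_edges n) v \<le> 2"
proof -
  have "{e \<in> path_edges n. v \<in> e} \<subseteq> {{v - 1, v}, {v, Suc v}}"
    using path_edges_incident by blast
  then have "degree (path_edges n) v \<le> card {{v - 1, v}, {v, Suc v}}"
    unfolding degree_def by (rule card_mono[rotated]) simp
  also have "\<dots> \<le> 2" by (rule card_doubleton_le)
  finally show ?thesis .
qed

lemma degree_path_edges_end_le: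
  assumes "v = 0 \<or> Suc v = n"
  shows "degree (path_edges n) v \<le> 1"
proof -
  have "{e \<in> path_edges n. v \<in> e} \<subseteq> {if v = 0 then {v, Suc v} else {v - 1, v}}"
    using path_edges_incident assms by fastforce
  then have "degree (path_edges n) v \<le> card {if v = 0 then {v, Suc v} else {v - 1, v}}"
    unfolding degree_def by (rule card_mono[rotated]) simp
  then show ?thesis by simp
qed

lemma cycle_edges_eq_insert: "cycle_edges n = insert {n - 1, 0} (path_edges n)"
  by (simp add: cycle_edges_def)

lemma closing_edge_notin_path_edges: "n \<ge> 3 \<Longrightarrow> {n - 1, 0} \<notin> path_edges n"
  by (auto simp: path_edges_def doubleton_eq_iff)

lemma card_cycle_edges: "n \<ge> 3 \<Longrightarrow> card (cycle_edges n) = n"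
  unfolding cycle_edges_eq_insert
  using card_insert_disjoint[OF finite_path_edges closing_edge_notin_path_edges] card_path_edges
  by simp

lemma card_cycle_edge: "n \<ge> 3 \<Longrightarrow> e \<in> cycle_edges n \<Longrightarrow> card e = 2"
  by (auto simp: cycle_edges_eq_insert card_path_edge)

lemma Union_cycle_edges_subset: "n \<ge> 3 \<Longrightarrow> \<Union>(cycle_edges n) \<subseteq> {..<n}"
  using Union_path_edges_subset[of n] by (auto simp: cycle_edges_eq_insert)

lemma degree_cycle_edges_le: "degree (cycle_edges n) v \<le> 2"
proof (cases "v = 0 \<or> Suc v = n")
  case True
  then show ?thesis
    using degree_insert_le[OF finite_path_edges, of "{n - 1, 0}" n v]
      degree_path_edges_end_le[OF True]
    by (simp add: cycle_edges_eq_insert)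
next
  case False
  then have "v \<notin> \<Union>{{n - 1, 0}}" by auto
  then show ?thesis
    using degree_Un_eq_left[of v "{{n - 1, 0}}" "path_edges n"] degree_path_edges_le[of n v]
    by (simp add: cycle_edges_def)
qed

definition p3_forest :: "nat \<Rightarrow> nat set set" where
  "p3_forest q = (\<Union>k<q. {{3 * k, 3 * k + 1}, {3 * k + 1, 3 * k + 2}})"

lemma p3_forest_0: "p3_forest 0 = {}"
  by (simp add: p3_forest_def)

lemma p3_forest_Suc:
  "p3_forest (Suc q) = p3_forest q \<union> {{3 * q, 3 * q + 1}, {3 * q + 1, 3 * q + 2}}"
  by (auto simp: p3_forest_def lessThan_Suc)

lemma Union_p3_forest_subset: "\<Union>(p3_forest q) \<subseteq> {..<3 * q}"
  by (auto simp: p3_forest_def)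

lemma locally_irregular_p3_forest: "locally_irregular (p3_forest q)"
proof (induction q)
  case 0
  then show ?case by (simp add: p3_forest_0 locally_irregular_def)
next
  case (Suc q)
  have "\<Union>(p3_forest q) \<inter> \<Union>{{3 * q, 3 * q + 1}, {3 * q + 1, 3 * q + 2}} = {}"
    using Union_p3_forest_subset[of q] by auto
  then show ?case
    unfolding p3_forest_Suc using Suc.IH
    by (intro locally_irregular_Un locally_irregular_path_3) simp_all
qed

lemma card_p3_forest: "card (p3_forest q) = 2 * q"
proof (induction q)
  case 0
  then show ?case by (simp add: p3_forest_0)
next
  case (Suc q)
  have "finite (p3_forest q)" by (simp add: p3_forest_def)
  moreover have "{3 * q, 3 * q + 1} \<notin> p3_forest q" "{3 * q + 1, 3 * q + 2} \<notin> p3_forest q"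
    using Union_p3_forest_subset[of q] by auto
  ultimately show ?case using Suc.IH by (simp add: p3_forest_Suc doubleton_eq_iff)
qed

lemma p3_forest_subset_path_edges:
  assumes "3 * q \<le> n"
  shows "p3_forest q \<subseteq> path_edges n"
proof
  fix e assume "e \<in> p3_forest q"
  then obtain k where "k < q"
    and e: "e = {3 * k, Suc (3 * k)} \<or> e = {Suc (3 * k), Suc (Suc (3 * k))}"
    by (auto simp: p3_forest_def)
  then have "3 * k < n - 1" "Suc (3 * k) < n - 1" using assms by linarith+
  with e show "e \<in> path_edges n" unfolding path_edges_eq_image by blast
qed

lemma irr_e_path_edges: "irr_e (path_edges n) = (n - 1) - 2 * (n div 3)"
proof -
  have "irr_e (path_edges n) = card (path_edges n) - card (p3_forest (n div 3))"
  proof (rule irr_e_eq_card_diff[OF finite_path_edges])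
    show "p3_forest (n div 3) \<subseteq> path_edges n" by (rule p3_forest_subset_path_edges) simp
    show "card K \<le> card (p3_forest (n div 3))"
      if "K \<subseteq> path_edges n" "locally_irregular K" for K
    proof -
      have "card K \<le> 2 * (card {..<n} div 3)"
        by (rule locally_irregular_subgraph_card_le[OF that(2,1) _ Union_path_edges_subset])
          (simp_all add: card_path_edge degree_path_edges_le)
      then show ?thesis by (simp add: card_p3_forest)
    qed
  qed (rule locally_irregular_p3_forest)
  then show ?thesis by (simp add: card_path_edges card_p3_forest)
qed

lemma irr_e_cycle_edges: "n \<ge> 3 \<Longrightarrow> irr_e (cycle_edges n) = n - 2 * (n div 3)"
proof -
  assume n: "n \<ge> 3"
  have "irr_e (cycle_edges n) = card (cycle_edges n) - card (p3_forest (n div 3))"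
  proof (rule irr_e_eq_card_diff)
    show "finite (cycle_edges n)" by (simp add: cycle_edges_eq_insert finite_path_edges)
    show "p3_forest (n div 3) \<subseteq> cycle_edges n"
      using p3_forest_subset_path_edges[of "n div 3" n] by (auto simp: cycle_edges_def)
    show "card K \<le> card (p3_forest (n div 3))"
      if "K \<subseteq> cycle_edges n" "locally_irregular K" for K
    proof -
      have "card K \<le> 2 * (card {..<n} div 3)"
        by (rule locally_irregular_subgraph_card_le[OF that(2,1) _ Union_cycle_edges_subset[OF n]])
          (simp_all add: card_cycle_edge[OF n] degree_cycle_edges_le)
      then show ?thesis by (simp add: card_p3_forest)
    qed
  qed (rule locally_irregular_p3_forest)
  then show ?thesis using n by (simp add: card_cycle_edges card_p3_forest)
qed

lemma nat_floor_pred_div_3: "n \<ge> 1 \<Longrightarrow> nat \<lfloor>(real n - 1) / 3\<rfloor> = (n - 1) div 3"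
  by (metis floor_divide_of_nat_eq of_nat_1 of_nat_diff nat_int of_nat_numeral)

lemma nat_ceiling_pred_div_3: "n \<ge> 1 \<Longrightarrow> nat \<lceil>(real n - 1) / 3\<rceil> = (n + 1) div 3"
proof -
  assume "n \<ge> 1"
  have "(real n - 1) / 3 = real_of_int (int n - 1) / real_of_int 3" by simp
  then have "\<lceil>(real n - 1) / 3\<rceil> = - (- (int n - 1) div 3)"
    by (simp only: ceiling_divide_eq_div)
  also have "\<dots> = int ((n + 1) div 3)" using \<open>n \<ge> 1\<close> by presburger
  finally show ?thesis by simp
qed

theorem theorem4:
  shows "(\<forall>n::nat. n \<ge> 2 \<longrightarrow>
            (n mod 3 = 1 \<longrightarrow> irr_e (path_edges n) = (n - 1) div 3) \<and>
            (n mod 3 = 2 \<longrightarrow> irr_e (path_edges n) = nat (ceiling ((real n - 1) / 3))) \<and>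
            (n mod 3 = 0 \<longrightarrow> irr_e (path_edges n) = nat (floor ((real n - 1) / 3))))
       \<and> (\<forall>n::nat. n \<ge> 3 \<longrightarrow> irr_e (cycle_edges n) = irr_e (path_edges n) + 1)"
proof (intro conjI allI impI)
  fix n :: nat assume "n \<ge> 2"
  define q where "q = n div 3"
  have irr: "irr_e (path_edges n) = (n - 1) - 2 * q" by (simp add: irr_e_path_edges q_def)
  have n_eq: "n = 3 * q + n mod 3" by (simp add: q_def)
  show "irr_e (path_edges n) = (n - 1) div 3" if "n mod 3 = 1"
  proof -
    have "(n - 1) div 3 = q" by (rule div_nat_eqI) (use n_eq that in simp)+
    with irr n_eq that show ?thesis by linarith
  qed
  show "irr_e (path_edges n) = nat \<lceil>(real n - 1) / 3\<rceil>" if "n mod 3 = 2"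
  proof -
    have "(n + 1) div 3 = q + 1" by (rule div_nat_eqI) (use n_eq that in simp)+
    moreover have "nat \<lceil>(real n - 1) / 3\<rceil> = (n + 1) div 3"
      using \<open>n \<ge> 2\<close> by (simp add: nat_ceiling_pred_div_3)
    ultimately show ?thesis using irr n_eq that by linarith
  qed
  show "irr_e (path_edges n) = nat \<lfloor>(real n - 1) / 3\<rfloor>" if "n mod 3 = 0"
  proof -
    have "(n - 1) div 3 = q - 1" by (rule div_nat_eqI) (use n_eq that \<open>n \<ge> 2\<close> in simp)+
    moreover have "nat \<lfloor>(real n - 1) / 3\<rfloor> = (n - 1) div 3"
      using \<open>n \<ge> 2\<close> by (simp add: nat_floor_pred_div_3)
    ultimately show ?thesis using irr n_eq that \<open>n \<ge> 2\<close> by linarith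
  qed
next
  fix n :: nat assume "n \<ge> 3"
  then show "irr_e (cycle_edges n) = irr_e (path_edges n) + 1"
    by (simp add: irr_e_cycle_edges irr_e_path_edges)
qed

end
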